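(* For each $i\in\{2,3,4\}$, the families $\mathrm{SLT}_1$ and $\mathrm{REG}_i^Z$ are incomparable, i.e., $\mathrm{SLT}_1\not\subseteq\mathrm{REG}_i^Z$ and $\mathrm{REG}_i^Z\not\subseteq\mathrm{SLT}_1$.
   Context: Strictly locally testable languages: let $V$ be an alphabet and $k\ge1$. For $B,I,E\subseteq V^k$ and $F\subseteq V^{\le k-1}$, $\mathrm{slt}(B,I,E,F)$ is the language over $V$ consisting of all words in $F$ together with all words $a_1\cdots a_n$ ($a_i\in V$, $n\ge k$) with $a_1\cdots a_k\in B$, $a_{j+1}\cdots a_{j+k}\in I$ for all $1\le j\le n-k-1$, and $a_{n-k+1}\cdots a_n\in E$. $\mathrm{SLT}_k$ is the family of languages of this form. For a regular language $L\subseteq V^*$, $\mathrm{State}(L)$ is the minimum number of states of a deterministic finite automaton over $V$ with total transition function accepting $L$; $\mathrm{REG}_n^Z=\{L\text{ regular}:\mathrm{State}(L)\le n\}$. *)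

theory Defs
  imports Main
begin

definition slt :: "'a set \<Rightarrow> nat \<Rightarrow> 'a list set \<Rightarrow> 'a list set \<Rightarrow> 'a list set \<Rightarrow> 'a list set \<Rightarrow> 'a list set" where
  "slt V k B I E F = F \<union>
     {w \<in> lists V. k \<le> length w \<and> take k w \<in> B
        \<and> (\<forall>j. 1 \<le> j \<and> j + k + 1 \<le> length w \<longrightarrow> take k (drop j w) \<in> I)
        \<and> drop (length w - k) w \<in> E}"

definition SLT :: "nat \<Rightarrow> 'a set \<Rightarrow> 'a list set set" where
  "SLT k V = {L. \<exists>B I E F.
      B \<subseteq> {w \<in> lists V. length w = k} \<and> I \<subseteq> {w \<in> lists V. length w = k}
    \<and> E \<subseteq> {w \<in> lists V. length w = k} \<and> F \<subseteq> {w \<in> lists V. length w + 1 \<le> k}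
    \<and> L = slt V k B I E F}"

definition dfa :: "'a set \<Rightarrow> 's set \<Rightarrow> 's \<Rightarrow> ('s \<Rightarrow> 'a \<Rightarrow> 's) \<Rightarrow> 's set \<Rightarrow> bool" where
  "dfa V Q q0 d Fin \<longleftrightarrow> finite Q \<and> q0 \<in> Q \<and> Fin \<subseteq> Q \<and> (\<forall>q\<in>Q. \<forall>a\<in>V. d q a \<in> Q)"

definition dfa_lang :: "'a set \<Rightarrow> 's \<Rightarrow> ('s \<Rightarrow> 'a \<Rightarrow> 's) \<Rightarrow> 's set \<Rightarrow> 'a list set" where
  "dfa_lang V q0 d Fin = {w \<in> lists V. foldl d q0 w \<in> Fin}"

definition accepts_with :: "'a set \<Rightarrow> nat \<Rightarrow> 'a list set \<Rightarrow> bool" where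
  "accepts_with V n L \<longleftrightarrow> (\<exists>(Q::nat set) q0 d Fin. dfa V Q q0 d Fin \<and> card Q = n \<and> dfa_lang V q0 d Fin = L)"

definition regular :: "'a set \<Rightarrow> 'a list set \<Rightarrow> bool" where
  "regular V L \<longleftrightarrow> (\<exists>n. accepts_with V n L)"

definition State :: "'a set \<Rightarrow> 'a list set \<Rightarrow> nat" where
  "State V L = (LEAST n. accepts_with V n L)"

definition REG_Z :: "'a set \<Rightarrow> nat \<Rightarrow> 'a list set set" where
  "REG_Z V n = {L. regular V L \<and> State V L \<le> n}"

end

theory Submission
  imports Defs
begin

text \<open>Over the alphabet \<open>{0,1,2}\<close> the 1-testable language whose words start with any letter,
  have only 1s and 2s inside and end in 0 or 2 has five pairwise distinguishable prefixes, so
  by the pigeonhole principle on the states reached by these prefixes it needs five states.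
  Conversely, the language of even-length words over \<open>{0}\<close> is accepted by a two-state
  automaton, but a 1-testable language containing \<open>0000\<close> contains every nonempty word over
  \<open>{0}\<close>, in particular \<open>000\<close>.\<close>

lemma foldl_dfa_in_states:
  assumes "dfa V Q q0 d Fin" "q \<in> Q" "w \<in> lists V"
  shows "foldl d q w \<in> Q"
  using assms(2,3) by (induction w arbitrary: q) (use assms(1) in \<open>auto simp: dfa_def\<close>)

definition distinguishable :: "'a list set \<Rightarrow> 'a list \<Rightarrow> 'a list \<Rightarrow> bool" where
  "distinguishable L u v \<longleftrightarrow> (\<exists>z. (u @ z \<in> L) \<noteq> (v @ z \<in> L))"

lemma accepts_with_ge_card_distinguishable:
  assumes acc: "accepts_with V n L"
    and W: "finite W" "W \<subseteq> lists V" "pairwise (distinguishable L) W"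
  shows "card W \<le> n"
proof -
  obtain Q :: "nat set" and q0 d Fin where D: "dfa V Q q0 d Fin" and n: "card Q = n"
    and L: "dfa_lang V q0 d Fin = L"
    using acc unfolding accepts_with_def by blast
  define state where "state w = foldl d q0 w" for w
  have "inj_on state W"
  proof (rule inj_onI, rule ccontr)
    fix u v assume uv: "u \<in> W" "v \<in> W" "state u = state v" "u \<noteq> v"
    then obtain z where "(u @ z \<in> L) \<noteq> (v @ z \<in> L)"
      using W(3) unfolding pairwise_def distinguishable_def by blast
    moreover have "u @ z \<in> L \<longleftrightarrow> v @ z \<in> L"
      using uv W(2) unfolding L[symmetric] dfa_lang_def state_def by auto
    ultimately show False by blast
  qed
  moreover have "state ` W \<subseteq> Q"
    using foldl_dfa_in_states[OF D] D W(2) unfolding state_def dfa_def by blast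
  moreover have "finite Q" using D by (simp add: dfa_def)
  ultimately show ?thesis using n by (metis card_image card_mono)
qed

lemma REG_Z_iff_accepts_with: "L \<in> REG_Z V i \<longleftrightarrow> (\<exists>n\<le>i. accepts_with V n L)"
proof
  assume "L \<in> REG_Z V i"
  then have "regular V L" "State V L \<le> i" by (auto simp: REG_Z_def)
  moreover from \<open>regular V L\<close> have "accepts_with V (State V L) L"
    unfolding regular_def State_def by (rule LeastI_ex)
  ultimately show "\<exists>n\<le>i. accepts_with V n L" by blast
next
  assume "\<exists>n\<le>i. accepts_with V n L"
  then obtain n where "n \<le> i" "accepts_with V n L" by blast
  then show "L \<in> REG_Z V i"
    unfolding REG_Z_def regular_def State_def by (auto intro: Least_le order_trans)
qed

definition inner_12_last_02 :: "nat list set" where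
  "inner_12_last_02 = slt {0,1,2} 1 {[0],[1],[2]} {[1],[2]} {[0],[2]} {}"

lemma inner_12_last_02_SLT: "inner_12_last_02 \<in> SLT 1 {0,1,2}"
  unfolding SLT_def inner_12_last_02_def
  by (rule CollectI, rule exI[of _ "{[0],[1],[2]}"], rule exI[of _ "{[1],[2]}"],
      rule exI[of _ "{[0],[2]}"], rule exI[of _ "{}"]) auto

lemma inner_12_last_02_members:
  "[0] \<in> inner_12_last_02" "[0,0] \<in> inner_12_last_02" "[1,0] \<in> inner_12_last_02"
  "[0,1,0] \<in> inner_12_last_02"
  and inner_12_last_02_nonmembers:
  "[] \<notin> inner_12_last_02" "[0,0,0] \<notin> inner_12_last_02" "[1,0,0] \<notin> inner_12_last_02"
  "[1,0,0,0] \<notin> inner_12_last_02" "[0,1] \<notin> inner_12_last_02"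
  "[0,1,0,0] \<notin> inner_12_last_02" "[0,0,0,0] \<notin> inner_12_last_02"
  "[0,0,0,0,0] \<notin> inner_12_last_02"
  unfolding inner_12_last_02_def slt_def by (auto simp: le_Suc_eq numeral_eq_Suc)

lemma five_prefixes_separated:
  "\<forall>u\<in>{[], [0], [1,0], [0,1], [0,0,0]}. \<forall>v\<in>{[], [0], [1,0], [0,1], [0,0,0]}. u \<noteq> v \<longrightarrow>
      (\<exists>z\<in>{[], [0], [0,0::nat]}. (u @ z \<in> inner_12_last_02) \<noteq> (v @ z \<in> inner_12_last_02))"
  using inner_12_last_02_members inner_12_last_02_nonmembers by (simp add: One_nat_def)

lemma five_prefixes_distinguishable:
  "pairwise (distinguishable inner_12_last_02) {[], [0], [1,0], [0,1], [0,0,0]}"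
  unfolding pairwise_def distinguishable_def
proof (intro ballI impI)
  fix u v :: "nat list"
  assume "u \<in> {[], [0], [1,0], [0,1], [0,0,0]}" "v \<in> {[], [0], [1,0], [0,1], [0,0,0]}" "u \<noteq> v"
  from five_prefixes_separated[rule_format, OF this]
  show "\<exists>z. (u @ z \<in> inner_12_last_02) \<noteq> (v @ z \<in> inner_12_last_02)" by blast
qed

lemma inner_12_last_02_not_REG_Z:
  assumes "i \<le> 4"
  shows "inner_12_last_02 \<notin> REG_Z {0,1,2} i"
proof
  assume "inner_12_last_02 \<in> REG_Z {0,1,2} i"
  then obtain n where "n \<le> i" and acc: "accepts_with {0,1,2} n inner_12_last_02"
    unfolding REG_Z_iff_accepts_with by blast
  from acc have "card {[], [0], [1,0], [0,1], [0,0,0::nat]} \<le> n"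
    by (rule accepts_with_ge_card_distinguishable[OF _ _ _ five_prefixes_distinguishable]) auto
  with \<open>n \<le> i\<close> assms show False by simp
qed

lemma SLT_1_replicate:
  assumes L: "L \<in> SLT 1 V" and long: "replicate n a \<in> L" "3 \<le> n" and "0 < m"
  shows "replicate m a \<in> L"
proof -
  obtain B I E F where F: "F \<subseteq> {w \<in> lists V. length w + 1 \<le> 1}" and L: "L = slt V 1 B I E F"
    using L unfolding SLT_def by blast
  have "replicate n a \<notin> F" using F long(2) by auto
  then have "a \<in> V" "[a] \<in> B" "[a] \<in> E" "take 1 (drop 1 (replicate n a)) \<in> I"
    using long unfolding L slt_def by (auto simp: Suc_le_eq)
  moreover have "take 1 (drop j (replicate m a)) = [a]" if "j < m" for j
    using that by (simp add: take_Suc_conv_app_nth)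
  ultimately show ?thesis
    using \<open>0 < m\<close> long(2) unfolding L slt_def by (auto simp: take_Suc_conv_app_nth Suc_le_eq)
qed

definition even_length :: "nat list set" where
  "even_length = {w \<in> lists {0}. even (length w)}"

lemma foldl_parity: "q < 2 \<Longrightarrow> foldl (\<lambda>q a. (q + 1) mod 2) q w = (q + length w) mod (2::nat)"
  by (induction w arbitrary: q) (auto simp: mod_Suc_eq mod_Suc)

lemma even_length_REG_Z: "2 \<le> i \<Longrightarrow> even_length \<in> REG_Z {0} i"
  unfolding REG_Z_iff_accepts_with accepts_with_def
  by (rule exI[of _ 2], simp, rule exI[of _ "{0,1}"], rule exI[of _ 0],
      rule exI[of _ "\<lambda>q a. (q + 1) mod 2"], rule exI[of _ "{0}"])
     (auto simp: dfa_def dfa_lang_def even_length_def foldl_parity[of 0, simplified]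
       even_iff_mod_2_eq_zero)

lemma even_length_not_SLT_1: "even_length \<notin> SLT 1 {0}"
proof
  assume "even_length \<in> SLT 1 {0}"
  moreover have "replicate 4 0 \<in> even_length" by (simp add: even_length_def in_lists_conv_set)
  ultimately have "replicate 3 0 \<in> even_length" by (rule SLT_1_replicate) auto
  then show False by (simp add: even_length_def)
qed

theorem mainTheorem8:
  shows "\<forall>i\<in>{2,3,4::nat}.
    (\<exists>V::nat set. finite V \<and> V \<noteq> {} \<and> \<not> (SLT 1 V \<subseteq> REG_Z V i))
  \<and> (\<exists>V::nat set. finite V \<and> V \<noteq> {} \<and> \<not> (REG_Z V i \<subseteq> SLT 1 V))"
proof
  fix i :: nat assume "i \<in> {2,3,4}"
  then have "i \<le> 4" "2 \<le> i" by auto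
  have "\<not> (SLT 1 {0,1,2::nat} \<subseteq> REG_Z {0,1,2} i)"
    using inner_12_last_02_SLT inner_12_last_02_not_REG_Z[OF \<open>i \<le> 4\<close>] by blast
  moreover have "\<not> (REG_Z {0::nat} i \<subseteq> SLT 1 {0})"
    using even_length_REG_Z[OF \<open>2 \<le> i\<close>] even_length_not_SLT_1 by blast
  ultimately show "(\<exists>V::nat set. finite V \<and> V \<noteq> {} \<and> \<not> (SLT 1 V \<subseteq> REG_Z V i))
    \<and> (\<exists>V::nat set. finite V \<and> V \<noteq> {} \<and> \<not> (REG_Z V i \<subseteq> SLT 1 V))"
    by (intro conjI exI[of _ "{0,1,2}"] exI[of _ "{0}"]) auto
qed

end
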